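(* Let $\bm H$ be a finite-dimensional Hilbert space, $\rho_{\rm i}$ a density operator on $\bm H$, $U$ a unitary on $\bm H$, and $\rho':=U\rho_{\rm i}U^\dagger$. Let $\{M_b\}_{b\in B}\subset L(\bm H)$ with $B$ finite and $\sum_b M_b^\dagger M_b=I$; put $E_b:=M_b^\dagger M_b$, $p(b):=\mathrm{tr}[E_b\rho']$, and for $p(b)>0$, $\rho'(b):=M_b\rho' M_b^\dagger/p(b)$. Let $I_{\rm QC}:=S(\rho')-\sum_b p(b)S(\rho'(b))$. For each $b$ let $U_b$ be a unitary on $\bm H$, $\rho_{\rm f}(b):=U_b\rho'(b)U_b^\dagger$, and let $\rho_0(b)$ be a density operator on $\bm H$. Then (all sums over $b$ with $p(b)>0$) $$-\sum_b p(b)\,\mathrm{tr}[\rho_{\rm f}(b)\ln\rho_0(b)]-S(\rho_{\rm i})=\sum_b p(b)\,S(\rho_{\rm f}(b)\|\rho_0(b))-I_{\rm QC},$$ and consequently $$-\sum_b p(b)\,\mathrm{tr}[\rho_{\rm f}(b)\ln\rho_0(b)]-S(\rho_{\rm i})\ge -I_{\rm QC}.$$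
   Context: $S(\rho):=-\mathrm{tr}[\rho\ln\rho]$ is the von Neumann entropy. The quantum relative entropy is $S(\rho\|\sigma):=\mathrm{tr}[\rho\ln\rho]-\mathrm{tr}[\rho\ln\sigma]$, set to $+\infty$ if there is $|\psi\rangle$ with $\sigma|\psi\rangle=0$ and $\langle\psi|\rho|\psi\rangle\ne0$; correspondingly $-\mathrm{tr}[\rho\ln\sigma]$ is $+\infty$ in that case and otherwise computed on the support of $\sigma$; $0\ln0=0$. *)

theory Defs
  imports "HOL-Analysis.Analysis" "HOL-Library.Extended_Real"
begin

text \<open>Finite-dimensional Hilbert space H = complex^'n (with 'n a finite index type);
  operators on H are complex matrices complex^'n^'n.\<close>

type_synonym 'n cmat = "complex^'n^'n"

definition cinner :: "complex^'n \<Rightarrow> complex^'n \<Rightarrow> complex" where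
  "cinner u v = (\<Sum>i\<in>UNIV. cnj (u$i) * v$i)"

definition adj :: "complex^'n^'n \<Rightarrow> complex^'n^'n" where
  "adj A = (\<chi> i j. cnj (A$j$i))"

definition outer :: "complex^'n \<Rightarrow> complex^'n \<Rightarrow> complex^'n^'n" where
  "outer u v = (\<chi> i j. u$i * cnj (v$j))"

definition hermitian :: "complex^'n^'n \<Rightarrow> bool" where
  "hermitian A \<longleftrightarrow> adj A = A"

definition unitary :: "complex^'n^'n \<Rightarrow> bool" where
  "unitary U \<longleftrightarrow> adj U ** U = mat 1 \<and> U ** adj U = mat 1"

definition density_op :: "complex^'n^'n \<Rightarrow> bool" where
  "density_op \<rho> \<longleftrightarrow> hermitian \<rho> \<and> (\<forall>v. 0 \<le> Re (cinner v (\<rho> *v v))) \<and> trace \<rho> = 1"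

definition spectral_decomp :: "complex^'n^'n \<Rightarrow> ('n \<Rightarrow> complex^'n) \<Rightarrow> ('n \<Rightarrow> real) \<Rightarrow> bool" where
  "spectral_decomp A w l \<longleftrightarrow>
     (\<forall>i j. cinner (w i) (w j) = (if i = j then 1 else 0)) \<and>
     (\<forall>i. A *v w i = complex_of_real (l i) *s w i)"

definition herm_fun :: "(real \<Rightarrow> real) \<Rightarrow> complex^'n^'n \<Rightarrow> complex^'n^'n" where
  "herm_fun f A = (SOME B. \<exists>w l. spectral_decomp A w l \<and>
       B = (\<Sum>i\<in>UNIV. f (l i) *\<^sub>R outer (w i) (w i)))"

text \<open>Logarithm on the support (ln 0 := 0, giving 0 ln 0 = 0).\<close>
definition ln0 :: "real \<Rightarrow> real" where
  "ln0 x = (if x = 0 then 0 else ln x)"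

definition mat_log :: "complex^'n^'n \<Rightarrow> complex^'n^'n" where
  "mat_log A = herm_fun ln0 A"

definition vN_entropy :: "complex^'n^'n \<Rightarrow> real" where
  "vN_entropy \<rho> = - Re (trace (\<rho> ** mat_log \<rho>))"

text \<open>- tr[rho ln sigma], +infinity if supp rho is not contained in supp sigma.\<close>
definition neg_tr_log :: "complex^'n^'n \<Rightarrow> complex^'n^'n \<Rightarrow> ereal" where
  "neg_tr_log \<rho> \<sigma> =
     (if \<exists>\<psi>. \<sigma> *v \<psi> = 0 \<and> cinner \<psi> (\<rho> *v \<psi>) \<noteq> 0 then PInfty
      else ereal (- Re (trace (\<rho> ** mat_log \<sigma>))))"

definition rel_entropy :: "complex^'n^'n \<Rightarrow> complex^'n^'n \<Rightarrow> ereal" where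
  "rel_entropy \<rho> \<sigma> =
     (if \<exists>\<psi>. \<sigma> *v \<psi> = 0 \<and> cinner \<psi> (\<rho> *v \<psi>) \<noteq> 0 then PInfty
      else ereal (Re (trace (\<rho> ** mat_log \<rho>)) - Re (trace (\<rho> ** mat_log \<sigma>))))"

end

theory Submission
  imports Defs
begin

text \<open>Conjugation by a unitary does not change the spectrum, so
  \<open>S(\<rho>') = S(\<rho>\<^sub>i)\<close> and \<open>S(\<rho>\<^sub>f(b)) = S(\<rho>'(b))\<close>. Since
  \<open>-tr[\<rho> ln \<sigma>] = S(\<rho>) + S(\<rho>\<parallel>\<sigma>)\<close> for every pair of operators (both sides being
  \<open>+\<infinity>\<close> together), summing over the outcomes gives the identity; the inequality is
  then Klein's inequality \<open>S(\<rho>\<parallel>\<sigma>) \<ge> 0\<close>. For Klein's inequality write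
  \<open>\<rho> = \<Sum> p\<^sub>i |a\<^sub>i\<rangle>\<langle>a\<^sub>i|\<close>, \<open>\<sigma> = \<Sum> q\<^sub>j |b\<^sub>j\<rangle>\<langle>b\<^sub>j|\<close>; the matrix
  \<open>P\<^sub>i\<^sub>j = |\<langle>a\<^sub>i,b\<^sub>j\<rangle>|\<^sup>2\<close> is doubly stochastic and
  \<open>S(\<rho>\<parallel>\<sigma>) = \<Sum> P\<^sub>i\<^sub>j p\<^sub>i (ln p\<^sub>i - ln q\<^sub>j) \<ge> \<Sum> P\<^sub>i\<^sub>j (p\<^sub>i - q\<^sub>j) = 0\<close> by
  \<open>ln x \<le> x - 1\<close>. The spectral theorem itself is obtained by repeatedly maximising
  the Rayleigh quotient on the orthogonal complement of the eigenvectors found so far.\<close>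

lemma adj_adj [simp]: "adj (adj A) = A"
  by (simp add: adj_def vec_eq_iff)

lemma adj_mult: "adj (A ** B) = adj B ** adj A"
  by (simp add: adj_def vec_eq_iff matrix_matrix_mult_def mult.commute)

lemma adj_scaleR: "adj (r *\<^sub>R A) = r *\<^sub>R adj A"
  by (simp add: adj_def vec_eq_iff)

lemma cnj_cinner: "cnj (cinner u v) = cinner v u"
  by (simp add: cinner_def mult.commute)

lemma cinner_adj: "cinner u (A *v v) = cinner (adj A *v u) v"
  by (simp add: cinner_def adj_def matrix_vector_mult_def sum_distrib_left sum_distrib_right
      mult_ac) (rule sum.swap)

lemma cinner_scale_right [simp]: "cinner u (a *s v) = a * cinner u v"
  by (simp add: cinner_def sum_distrib_left mult_ac)

lemma cinner_scale_left [simp]: "cinner (a *s u) v = cnj a * cinner u v"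
  by (simp add: cinner_def sum_distrib_left mult_ac)

lemma cinner_add_right [simp]: "cinner u (v + w) = cinner u v + cinner u w"
  by (simp add: cinner_def sum.distrib algebra_simps)

lemma cinner_add_left [simp]: "cinner (u + v) w = cinner u w + cinner v w"
  by (simp add: cinner_def sum.distrib algebra_simps)

lemma cinner_diff_right [simp]: "cinner u (v - w) = cinner u v - cinner u w"
  by (simp add: cinner_def sum_subtractf algebra_simps)

lemma cinner_zero_right [simp]: "cinner u 0 = 0"
  by (simp add: cinner_def)

lemma cinner_sum_right: "cinner u (sum f S) = (\<Sum>i\<in>S. cinner u (f i))"
  by (simp add: cinner_def sum_distrib_left sum.swap[of _ S])

lemma Re_cinner_self: "Re (cinner x x) = norm x ^ 2"
proof -
  have "Re (cinner x x) = (\<Sum>i\<in>UNIV. (cmod (x$i))^2)"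
    by (simp add: cinner_def cmod_def power2_eq_square)
  also have "\<dots> = norm x ^ 2"
    by (simp add: norm_vec_def L2_set_def sum_nonneg)
  finally show ?thesis .
qed

lemma cinner_self_eq_of_real: "cinner x x = of_real (Re (cinner x x))"
  by (simp add: cinner_def complex_eq_iff mult.commute)

lemma cinner_mult_cinner_commute: "cinner u v * cinner v u = of_real ((cmod (cinner u v))^2)"
proof -
  have "cinner v u = cnj (cinner u v)" by (simp add: cnj_cinner)
  thus ?thesis using complex_norm_square[of "cinner u v"] by simp
qed

lemma continuous_on_cinner_right: "continuous_on X (\<lambda>x. cinner u x)"
  unfolding cinner_def by (intro continuous_intros continuous_on_component)

lemma continuous_on_quadratic_form: "continuous_on X (\<lambda>x. Re (cinner x (A *v x)))"
  unfolding cinner_def matrix_vector_mult_def by (intro continuous_intros continuous_on_component)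

lemma matrix_vector_mult_sum_left: "(sum f S) *v x = (\<Sum>i\<in>S. f i *v (x::complex^'n))"
  by (simp add: matrix_vector_mult_def vec_eq_iff sum_component sum_distrib_right sum.swap[of _ S])

lemma matrix_vector_mult_scaleR_left:
  "(r *\<^sub>R M) *v x = complex_of_real r *s (M *v (x::complex^'n))"
  by (simp add: matrix_vector_mult_def vec_eq_iff) (simp add: sum_distrib_left scaleR_conv_of_real mult_ac)

lemma matrix_mult_sum_right: "X ** (sum f S) = (\<Sum>i\<in>S. X ** f i :: complex^'n^'n)"
  by (simp add: matrix_matrix_mult_def vec_eq_iff sum_component sum_distrib_left sum.swap[of _ S])

lemma matrix_mult_scaleR_right: "X ** (r *\<^sub>R M) = r *\<^sub>R (X ** M :: complex^'n^'n)"
  by (simp add: matrix_matrix_mult_def vec_eq_iff) (simp add: sum_distrib_left scaleR_conv_of_real mult_ac)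

lemma outer_apply: "outer u v *v x = cinner v x *s u"
  by (simp add: outer_def cinner_def matrix_vector_mult_def vec_eq_iff sum_distrib_left mult_ac)

lemma matrix_mult_outer: "X ** outer u v = outer (X *v u) v"
  by (simp add: outer_def matrix_matrix_mult_def matrix_vector_mult_def vec_eq_iff
      sum_distrib_right sum_distrib_left mult_ac)

lemma outer_of_real_scale_left: "outer (complex_of_real r *s u) v = r *\<^sub>R outer u v"
  by (simp add: outer_def vec_eq_iff) (simp add: scaleR_conv_of_real)

lemma trace_outer: "trace (outer u v) = cinner v u"
  by (simp add: trace_def outer_def cinner_def mult.commute)

lemma trace_sum: "trace (sum f S) = (\<Sum>i\<in>S. trace (f i))"
  by (simp add: trace_def sum.swap[of _ S])

lemma trace_scaleR: "trace (r *\<^sub>R A) = of_real r * trace A"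
  by (simp add: trace_def sum_distrib_left) (simp add: scaleR_conv_of_real)

lemma quadratic_form_add_scale:
  "cinner (x + c *s y) (A *v (x + c *s y)) =
     cinner x (A *v x) + c * cinner x (A *v y) + cnj c * cinner y (A *v x) + cnj c * c * cinner y (A *v y)"
  by (simp add: matrix_vector_right_distrib vector_scalar_commute algebra_simps)

lemma hermitian_cinner: "hermitian A \<Longrightarrow> cinner u (A *v v) = cinner (A *v u) v"
  by (metis cinner_adj hermitian_def)

lemma hermitian_quadratic_form_real:
  assumes "hermitian A"
  shows "cinner x (A *v x) = of_real (Re (cinner x (A *v x)))"
proof -
  have "cnj (cinner x (A *v x)) = cinner x (A *v x)"
    by (simp add: cnj_cinner hermitian_cinner[OF assms])
  hence "Im (cinner x (A *v x)) = 0" by (metis cnj.sel(2) neg_equal_zero)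
  thus ?thesis by (simp add: complex_eq_iff)
qed

lemma hermitian_conj: "hermitian A \<Longrightarrow> hermitian (V ** A ** adj V)"
  by (simp add: hermitian_def adj_mult matrix_mul_assoc)

lemma hermitian_scaleR: "hermitian A \<Longrightarrow> hermitian (r *\<^sub>R A)"
  by (simp add: hermitian_def adj_scaleR)

lemma trace_hermitian_real:
  assumes "hermitian A"
  shows "trace A = of_real (Re (trace A))"
proof -
  have "A$i$i = cnj (A$i$i)" for i
    using assms unfolding hermitian_def adj_def by (metis vec_lambda_beta)
  hence "Im (A$i$i) = 0" for i by (metis cnj.sel(2) neg_equal_zero)
  hence "Im (trace A) = 0" by (simp add: trace_def Im_sum)
  thus ?thesis by (simp add: complex_eq_iff)
qed

lemma unitary_cinner: "unitary U \<Longrightarrow> cinner (U *v u) (U *v v) = cinner u v"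
  by (simp add: cinner_adj matrix_vector_mul_assoc unitary_def)

lemma trace_unitary_conj:
  assumes "unitary V"
  shows "trace (V ** A ** adj V) = trace A"
proof -
  have "trace (V ** A ** adj V) = trace (adj V ** (V ** A))" by (rule trace_mul_sym)
  also have "\<dots> = trace A" using assms by (simp add: matrix_mul_assoc unitary_def)
  finally show ?thesis .
qed

section \<open>The spectral theorem\<close>

definition orthonormal_set :: "(complex^'n) set \<Rightarrow> bool" where
  "orthonormal_set S \<longleftrightarrow> (\<forall>u\<in>S. \<forall>v\<in>S. cinner u v = (if u = v then 1 else 0))"

definition orthogonal_complement :: "(complex^'n) set \<Rightarrow> (complex^'n) set" where
  "orthogonal_complement S = {x. \<forall>v\<in>S. cinner v x = 0}"

lemma subspace_orthogonal_complement: "vec.subspace (orthogonal_complement S)"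
  by (simp add: vec.subspace_def orthogonal_complement_def)

lemma closed_orthogonal_complement: "closed (orthogonal_complement S)"
proof -
  have "orthogonal_complement S = (\<Inter>v\<in>S. {x. cinner v x = 0})"
    by (auto simp: orthogonal_complement_def)
  thus ?thesis
    by (simp add: closed_INT closed_Collect_eq continuous_on_cinner_right continuous_on_const)
qed

lemma orthogonal_complement_nonzero:
  fixes S :: "(complex^'n) set"
  assumes "orthonormal_set S" "finite S" "card S < CARD('n)"
  shows "\<exists>z \<in> orthogonal_complement S. z \<noteq> 0"
proof -
  have "vec.span S \<noteq> UNIV"
  proof
    assume "vec.span S = UNIV"
    hence "vec.dim (UNIV::(complex^'n) set) \<le> card S"
      using vec.dim_le_card[of UNIV S] assms(2) by auto
    thus False using vec_dim_card[where 'a=complex and 'n='n] assms(3) by simp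
  qed
  then obtain y where y: "y \<notin> vec.span S" by auto
  define z where "z = y - (\<Sum>v\<in>S. cinner v y *s v)"
  have "cinner u z = 0" if "u \<in> S" for u
  proof -
    have "cinner u (\<Sum>v\<in>S. cinner v y *s v) = (\<Sum>v\<in>S. if v = u then cinner u y else 0)"
      using assms(1) that unfolding orthonormal_set_def
      by (auto simp: cinner_sum_right intro!: sum.cong)
    also have "\<dots> = cinner u y" using that assms(2) by simp
    finally show ?thesis by (simp add: z_def)
  qed
  moreover have "z \<noteq> 0"
  proof
    assume "z = 0"
    hence "y = (\<Sum>v\<in>S. cinner v y *s v)" by (simp add: z_def)
    moreover have "(\<Sum>v\<in>S. cinner v y *s v) \<in> vec.span S"
      by (intro vec.span_sum vec.span_scale vec.span_base)
    ultimately show False using y by simp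
  qed
  ultimately show ?thesis by (auto simp: orthogonal_complement_def)
qed

lemma hermitian_preserves_orthogonal_complement:
  assumes "hermitian A" "\<forall>v\<in>S. \<exists>\<mu>::real. A *v v = of_real \<mu> *s v" "x \<in> orthogonal_complement S"
  shows "A *v x \<in> orthogonal_complement S"
  using assms by (auto simp: orthogonal_complement_def hermitian_cinner)

text \<open>First variation: if the Rayleigh quotient on \<open>V\<close> is maximal at \<open>x\<^sub>0\<close>, then moving
  \<open>x\<^sub>0\<close> in the direction of the residual \<open>y = A x\<^sub>0 - \<lambda> x\<^sub>0\<close> gains \<open>2t|y|\<^sup>2\<close> at first
  order, which forces \<open>y = 0\<close>.\<close>
lemma rayleigh_maximizer_is_eigenvector:
  fixes A :: "complex^'n^'n"
  assumes h: "hermitian A" and V: "vec.subspace V" and x0: "x0 \<in> V" "A *v x0 \<in> V"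
    and unit: "cinner x0 x0 = 1"
    and max: "\<And>z. z \<in> V \<Longrightarrow> Re (cinner z (A *v z)) \<le> Re (cinner x0 (A *v x0)) * Re (cinner z z)"
  shows "A *v x0 = of_real (Re (cinner x0 (A *v x0))) *s x0"
proof -
  define lam where "lam = Re (cinner x0 (A *v x0))"
  define y where "y = A *v x0 - of_real lam *s x0"
  have Ax0: "A *v x0 = y + of_real lam *s x0" by (simp add: y_def)
  have yV: "y \<in> V" unfolding y_def using V x0 by (intro vec.subspace_diff vec.subspace_scale)
  have x0y: "cinner x0 y = 0"
    using hermitian_quadratic_form_real[OF h, of x0] unit by (simp add: y_def lam_def)
  have yx0: "cinner y x0 = 0" using x0y cnj_cinner[of x0 y] by simp
  define Y where "Y = Re (cinner y y)"
  define C where "C = Re (cinner y (A *v y))"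
  have variation: "2 * t * Y \<le> t^2 * (lam * Y - C)" for t :: real
  proof -
    define z where "z = x0 + of_real t *s y"
    have "z \<in> V" unfolding z_def using V x0 yV by (intro vec.subspace_add vec.subspace_scale)
    have e1: "cinner x0 (A *v y) = cinner y y"
      by (simp add: hermitian_cinner[OF h] Ax0 x0y)
    have e2: "cinner y (A *v x0) = cinner y y"
      by (simp add: Ax0 yx0)
    have "Re (cinner z (A *v z)) = lam + 2 * t * Y + t^2 * C"
      unfolding z_def quadratic_form_add_scale e1 e2 using hermitian_quadratic_form_real[OF h, of x0]
      by (simp add: lam_def Y_def C_def power2_eq_square algebra_simps)
    moreover have "Re (cinner z z) = 1 + t^2 * Y"
      using unit by (simp add: z_def x0y yx0 Y_def power2_eq_square)
    ultimately show ?thesis using max[OF \<open>z \<in> V\<close>] by (simp add: lam_def algebra_simps)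
  qed
  have "Y = 0"
  proof (rule ccontr)
    assume "Y \<noteq> 0"
    hence Yp: "Y > 0" by (simp add: Y_def Re_cinner_self)
    define t where "t = Y / (\<bar>lam * Y - C\<bar> + 1)"
    have tp: "t > 0" using Yp by (simp add: t_def)
    have "2 * t * Y \<le> t * (t * (lam * Y - C))" using variation[of t] by (simp add: power2_eq_square)
    hence "2 * Y \<le> t * (lam * Y - C)" using tp by simp
    also have "\<dots> \<le> t * \<bar>lam * Y - C\<bar>" using tp by (intro mult_left_mono) auto
    also have "\<dots> < Y" using Yp unfolding t_def by (simp add: field_simps)
    finally show False using Yp by simp
  qed
  hence "y = 0" by (simp add: Y_def Re_cinner_self)
  hence "A *v x0 = of_real lam *s x0" using Ax0 by simp
  thus ?thesis by (simp only: lam_def)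
qed

lemma exists_rayleigh_maximizer:
  fixes A :: "complex^'n^'n" and V :: "(complex^'n) set"
  assumes V: "vec.subspace V" "closed V" and nz: "z \<in> V" "z \<noteq> 0"
  shows "\<exists>x0\<in>V. cinner x0 x0 = 1 \<and>
           (\<forall>z\<in>V. Re (cinner z (A *v z)) \<le> Re (cinner x0 (A *v x0)) * Re (cinner z z))"
proof -
  have normalize: "complex_of_real (1 / norm z) *s z \<in> V \<and>
      Re (cinner (complex_of_real (1 / norm z) *s z) (complex_of_real (1 / norm z) *s z)) = 1"
    if "z \<in> V" "z \<noteq> 0" for z
    using that V by (simp add: vec.subspace_scale Re_cinner_self power2_eq_square)
  define K where "K = V \<inter> {x. Re (cinner x x) = 1}"
  have "K \<noteq> {}" using normalize[OF nz] unfolding K_def by blast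
  moreover have "compact K"
    unfolding compact_eq_bounded_closed
  proof
    show "bounded K" unfolding bounded_iff K_def
      by (rule exI[of _ 1]) (auto simp: Re_cinner_self power2_eq_1_iff)
    have "closed {x::complex^'n. Re (cinner x x) = 1}"
      by (intro closed_Collect_eq) (auto intro!: continuous_intros continuous_on_component simp: cinner_def)
    thus "closed K" using V by (simp add: K_def closed_Int)
  qed
  ultimately obtain x0 where x0: "x0 \<in> K" and max: "\<forall>y\<in>K. Re (cinner y (A *v y)) \<le> Re (cinner x0 (A *v x0))"
    using continuous_attains_sup[OF _ _ continuous_on_quadratic_form] by blast
  have bound: "Re (cinner z (A *v z)) \<le> Re (cinner x0 (A *v x0)) * Re (cinner z z)" if "z \<in> V" for z
  proof (cases "z = 0")
    case True then show ?thesis by simp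
  next
    case False
    define z' where "z' = complex_of_real (1 / norm z) *s z"
    have "z' \<in> K" using normalize[OF that False] unfolding K_def z'_def by blast
    hence "Re (cinner z' (A *v z')) \<le> Re (cinner x0 (A *v x0))" using max by blast
    moreover have "Re (cinner z' (A *v z')) = (1 / norm z) * ((1 / norm z) * Re (cinner z (A *v z)))"
      by (simp add: z'_def vector_scalar_commute)
    ultimately show ?thesis using False by (simp add: field_simps Re_cinner_self power2_eq_square)
  qed
  have "cinner x0 x0 = 1" using x0 cinner_self_eq_of_real[of x0] by (simp add: K_def)
  thus ?thesis using x0 bound by (auto simp: K_def)
qed

lemma exists_orthonormal_eigenvectors:
  fixes A :: "complex^'n^'n"
  assumes h: "hermitian A" and "k \<le> CARD('n)"
  shows "\<exists>S. finite S \<and> card S = k \<and> orthonormal_set S \<and> (\<forall>v\<in>S. \<exists>\<mu>::real. A *v v = of_real \<mu> *s v)"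
  using assms(2)
proof (induction k)
  case 0 show ?case by (rule exI[of _ "{}"]) (simp add: orthonormal_set_def)
next
  case (Suc k)
  then obtain S where S: "finite S" "card S = k" "orthonormal_set S"
      and eig: "\<forall>v\<in>S. \<exists>\<mu>::real. A *v v = of_real \<mu> *s v"
    by auto
  define V where "V = orthogonal_complement S"
  obtain z where "z \<in> V" "z \<noteq> 0"
    using orthogonal_complement_nonzero[OF S(3,1)] S(2) Suc.prems by (auto simp: V_def)
  then obtain x where x: "x \<in> V" "cinner x x = 1"
      and max: "\<forall>z\<in>V. Re (cinner z (A *v z)) \<le> Re (cinner x (A *v x)) * Re (cinner z z)"
    using exists_rayleigh_maximizer[OF subspace_orthogonal_complement closed_orthogonal_complement]
    unfolding V_def by blast
  have "A *v x \<in> V"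
    using hermitian_preserves_orthogonal_complement[OF h eig] x(1) by (simp add: V_def)
  hence "A *v x = of_real (Re (cinner x (A *v x))) *s x"
    using x max unfolding V_def
    by (intro rayleigh_maximizer_is_eigenvector[OF h subspace_orthogonal_complement]) auto
  moreover have xS: "x \<notin> S" and "orthonormal_set (insert x S)"
    using S(3) x cnj_cinner[of _ x] unfolding V_def orthonormal_set_def orthogonal_complement_def
    by (auto, metis complex_cnj_zero)
  ultimately show ?case using S eig xS by (intro exI[of _ "insert x S"]) auto
qed

lemma spectral_decomp_exists:
  fixes A :: "complex^'n^'n"
  assumes "hermitian A"
  shows "\<exists>w l. spectral_decomp A w l"
proof -
  obtain S where S: "finite S" "card S = CARD('n)" "orthonormal_set S"
      and eig: "\<forall>v\<in>S. \<exists>\<mu>::real. A *v v = of_real \<mu> *s v"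
    using exists_orthonormal_eigenvectors[OF assms, of "CARD('n)"] by auto
  obtain f where f: "bij_betw f (UNIV::'n set) S"
    using finite_same_card_bij[of "UNIV::'n set" S] S by auto
  define l where "l i = (SOME \<mu>::real. A *v f i = of_real \<mu> *s f i)" for i
  have fi: "f i \<in> S" for i using f by (auto simp: bij_betw_def)
  have inj: "f i = f j \<longleftrightarrow> i = j" for i j using f by (auto simp: bij_betw_def inj_on_def)
  have "A *v f i = of_real (l i) *s f i" for i
    unfolding l_def by (rule someI_ex) (use eig fi in auto)
  moreover have "cinner (f i) (f j) = (if i = j then 1 else 0)" for i j
    using S(3) fi inj unfolding orthonormal_set_def by metis
  ultimately show ?thesis unfolding spectral_decomp_def by blast
qed

section \<open>Functional calculus and entropy\<close>

definition spectral_sum :: "(real \<Rightarrow> real) \<Rightarrow> ('n \<Rightarrow> complex^'n) \<Rightarrow> ('n \<Rightarrow> real) \<Rightarrow> complex^'n^'n" where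
  "spectral_sum f w l = (\<Sum>i\<in>UNIV. f (l i) *\<^sub>R outer (w i) (w i))"

lemma spectral_decomp_resolution_of_identity:
  assumes "spectral_decomp A w l"
  shows "(\<Sum>i\<in>UNIV. outer (w i) (w i)) = (mat 1 :: complex^'n^'n)"
proof -
  define W :: "complex^'n^'n" where "W = (\<chi> r c. w c $ r)"
  have "adj W ** W = mat 1"
    using assms by (simp add: spectral_decomp_def W_def adj_def matrix_matrix_mult_def mat_def
        vec_eq_iff cinner_def)
  hence "W ** adj W = mat 1" by (simp add: matrix_left_right_inverse)
  thus ?thesis by (simp add: W_def adj_def matrix_matrix_mult_def outer_def vec_eq_iff sum_component)
qed

lemma spectral_decomp_expansion:
  assumes "spectral_decomp A w l"
  shows "(\<Sum>i\<in>UNIV. cinner (w i) x *s w i) = x"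
  using arg_cong[OF spectral_decomp_resolution_of_identity[OF assms], of "\<lambda>M. M *v x"]
  by (simp add: matrix_vector_mult_sum_left outer_apply)

lemma spectral_decomp_eq_spectral_sum:
  assumes "spectral_decomp A w l"
  shows "A = spectral_sum id w l"
proof -
  have "A = A ** mat 1" by simp
  also have "\<dots> = (\<Sum>i\<in>UNIV. A ** outer (w i) (w i))"
    by (simp add: spectral_decomp_resolution_of_identity[OF assms, symmetric] matrix_mult_sum_right)
  also have "\<dots> = spectral_sum id w l"
    using assms by (simp add: spectral_decomp_def spectral_sum_def matrix_mult_outer outer_of_real_scale_left)
  finally show ?thesis .
qed

lemma spectral_decomp_eigenvalues_agree:
  assumes h: "hermitian A" and d: "spectral_decomp A w l" and d': "spectral_decomp A w' l'"
    and nz: "cinner (w i) (w' k) \<noteq> 0"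
  shows "l i = l' k"
proof -
  have "cinner (w i) (A *v w' k) = of_real (l' k) * cinner (w i) (w' k)"
    using d' by (simp add: spectral_decomp_def)
  moreover have "cinner (w i) (A *v w' k) = of_real (l i) * cinner (w i) (w' k)"
    using d by (simp add: hermitian_cinner[OF h] spectral_decomp_def)
  ultimately have "of_real (l i) = (of_real (l' k) :: complex)" using nz by simp
  thus ?thesis by simp
qed

lemma spectral_sum_unique:
  assumes h: "hermitian A" and d: "spectral_decomp A w l" and d': "spectral_decomp A w' l'"
  shows "spectral_sum f w l = spectral_sum f w' l'"
proof -
  define X where "X = spectral_sum f w l"
  have "X *v w' k = of_real (f (l' k)) *s w' k" for k
  proof -
    have "X *v w' k = (\<Sum>i\<in>UNIV. (of_real (f (l i)) * cinner (w i) (w' k)) *s w i)"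
      by (simp add: X_def spectral_sum_def matrix_vector_mult_sum_left matrix_vector_mult_scaleR_left
          outer_apply vector_smult_assoc)
    also have "\<dots> = (\<Sum>i\<in>UNIV. of_real (f (l' k)) *s (cinner (w i) (w' k) *s w i))"
      by (intro sum.cong refl)
        (metis spectral_decomp_eigenvalues_agree[OF h d d'] mult_zero_right vector_smult_assoc)
    also have "\<dots> = of_real (f (l' k)) *s w' k"
      by (simp only: vec.scale_sum_right[symmetric] spectral_decomp_expansion[OF d])
    finally show ?thesis .
  qed
  hence "X = (\<Sum>k\<in>UNIV. X ** outer (w' k) (w' k))"
    by (simp add: spectral_decomp_resolution_of_identity[OF d'] matrix_mult_sum_right[symmetric])
  also have "\<dots> = spectral_sum f w' l'"
    by (simp add: spectral_sum_def matrix_mult_outer \<open>\<And>k. X *v w' k = _\<close> outer_of_real_scale_left)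
  finally show ?thesis by (simp add: X_def)
qed

lemma herm_fun_eq_spectral_sum:
  assumes h: "hermitian A" and d: "spectral_decomp A w l"
  shows "herm_fun f A = spectral_sum f w l"
proof -
  have "\<exists>B w l. spectral_decomp A w l \<and> B = (\<Sum>i\<in>UNIV. f (l i) *\<^sub>R outer (w i) (w i))"
    using spectral_decomp_exists[OF h] by blast
  from someI_ex[OF this] obtain w' l' where "spectral_decomp A w' l'" "herm_fun f A = spectral_sum f w' l'"
    unfolding herm_fun_def spectral_sum_def by blast
  thus ?thesis using spectral_sum_unique[OF h d] by simp
qed

lemma trace_mult_spectral_sum:
  "trace (X ** spectral_sum f w l) = (\<Sum>j\<in>UNIV. of_real (f (l j)) * cinner (w j) (X *v w j))"
  by (simp add: spectral_sum_def matrix_mult_sum_right matrix_mult_scaleR_right trace_sum trace_scaleR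
      matrix_mult_outer trace_outer)

lemma Re_trace_mult_herm_fun_self:
  assumes h: "hermitian A" and d: "spectral_decomp A w l"
  shows "Re (trace (A ** herm_fun f A)) = (\<Sum>i\<in>UNIV. f (l i) * l i)"
  using d by (simp add: herm_fun_eq_spectral_sum[OF h d] trace_mult_spectral_sum spectral_decomp_def Re_sum)

lemma vN_entropy_unitary_conj:
  assumes h: "hermitian A" and u: "unitary U"
  shows "vN_entropy (U ** A ** adj U) = vN_entropy A"
proof -
  obtain w l where d: "spectral_decomp A w l" using spectral_decomp_exists[OF h] by blast
  have "(U ** A ** adj U) *v (U *v w i) = U *v (A *v w i)" for i
    using u by (simp add: matrix_vector_mul_assoc[symmetric] unitary_def)
      (simp add: matrix_vector_mul_assoc matrix_mul_assoc[symmetric])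
  hence "spectral_decomp (U ** A ** adj U) (\<lambda>i. U *v w i) l"
    using d u by (simp add: spectral_decomp_def unitary_cinner vector_scalar_commute)
  thus ?thesis
    using d by (simp add: vN_entropy_def mat_log_def Re_trace_mult_herm_fun_self h hermitian_conj)
qed

section \<open>Klein's inequality\<close>

definition positive_semidef :: "complex^'n^'n \<Rightarrow> bool" where
  "positive_semidef A \<longleftrightarrow> (\<forall>v. 0 \<le> Re (cinner v (A *v v)))"

lemma density_op_iff: "density_op \<rho> \<longleftrightarrow> hermitian \<rho> \<and> positive_semidef \<rho> \<and> trace \<rho> = 1"
  by (simp add: density_op_def positive_semidef_def)

lemma trace_spectral_decomp:
  assumes "spectral_decomp A w l"
  shows "trace A = (\<Sum>i\<in>UNIV. of_real (l i))"
  using trace_mult_spectral_sum[of "mat 1" id w l] assms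
  by (simp add: spectral_decomp_eq_spectral_sum[OF assms, symmetric] spectral_decomp_def)

lemma quadratic_form_spectral_decomp:
  assumes "spectral_decomp A w l"
  shows "cinner v (A *v v) = (\<Sum>i\<in>UNIV. of_real (l i * (cmod (cinner (w i) v))^2))"
proof -
  have "cinner v (A *v v) = (\<Sum>i\<in>UNIV. of_real (l i) * (cinner (w i) v * cinner v (w i)))"
    by (subst spectral_decomp_eq_spectral_sum[OF assms])
      (simp add: spectral_sum_def matrix_vector_mult_sum_left matrix_vector_mult_scaleR_left outer_apply
        cinner_sum_right mult.assoc)
  also have "\<dots> = (\<Sum>i\<in>UNIV. of_real (l i * (cmod (cinner (w i) v))^2))"
    by (intro sum.cong refl) (simp add: cinner_mult_cinner_commute)
  finally show ?thesis .
qed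

lemma parseval:
  assumes "spectral_decomp A w l"
  shows "(\<Sum>i\<in>UNIV. (cmod (cinner (w i) x))^2) = Re (cinner x x)"
proof -
  have "cinner x x = cinner x (\<Sum>i\<in>UNIV. cinner (w i) x *s w i)"
    by (simp add: spectral_decomp_expansion[OF assms])
  also have "\<dots> = (\<Sum>i\<in>UNIV. of_real ((cmod (cinner (w i) x))^2))"
    by (simp add: cinner_sum_right cinner_mult_cinner_commute)
  finally show ?thesis by (simp add: Re_sum)
qed

lemma density_op_spectrum:
  assumes "density_op \<rho>" "spectral_decomp \<rho> w l"
  shows "l i \<ge> 0" and "(\<Sum>i\<in>UNIV. l i) = 1"
proof -
  have "cinner (w i) (\<rho> *v w i) = of_real (l i)" using assms(2) by (simp add: spectral_decomp_def)
  thus "l i \<ge> 0" using assms(1) unfolding density_op_def by (metis Re_complex_of_real)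
  have "complex_of_real (\<Sum>i\<in>UNIV. l i) = 1"
    using trace_spectral_decomp[OF assms(2)] assms(1) by (simp add: density_op_def)
  thus "(\<Sum>i\<in>UNIV. l i) = 1" by (simp only: of_real_eq_1_iff)
qed

lemma spectral_decomp_overlap_doubly_stochastic:
  assumes da: "spectral_decomp A a p" and db: "spectral_decomp B b q"
  shows "(\<Sum>j\<in>UNIV. (cmod (cinner (a i) (b j)))^2) = 1"
    and "(\<Sum>i\<in>UNIV. (cmod (cinner (a i) (b j)))^2) = 1"
proof -
  have "cmod (cinner (a i) (b j)) = cmod (cinner (b j) (a i))" for i j
    by (metis cnj_cinner complex_mod_cnj)
  thus "(\<Sum>j\<in>UNIV. (cmod (cinner (a i) (b j)))^2) = 1"
    using parseval[OF db, of "a i"] da by (simp add: spectral_decomp_def)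
  show "(\<Sum>i\<in>UNIV. (cmod (cinner (a i) (b j)))^2) = 1"
    using parseval[OF da, of "b j"] db by (simp add: spectral_decomp_def)
qed

lemma Re_trace_mult_herm_fun:
  assumes "hermitian A" "spectral_decomp A w l"
  shows "Re (trace (X ** herm_fun f A)) = (\<Sum>j\<in>UNIV. f (l j) * Re (cinner (w j) (X *v w j)))"
  by (simp add: herm_fun_eq_spectral_sum[OF assms] trace_mult_spectral_sum Re_sum)

lemma ln0_diff_ge:
  fixes p q :: real
  assumes "p \<ge> 0" "q \<ge> 0" "p \<noteq> 0 \<Longrightarrow> q > 0"
  shows "p - q \<le> p * (ln0 p - ln0 q)"
proof (cases "p = 0")
  case True
  thus ?thesis using assms by (simp add: ln0_def)
next
  case False
  hence pq: "p > 0" "q > 0" using assms by auto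
  have "ln (q / p) \<le> q / p - 1" using pq by (intro ln_le_minus_one) auto
  hence "p * (ln q - ln p) \<le> q - p" using pq by (simp add: ln_div field_simps)
  thus ?thesis using pq by (simp add: ln0_def algebra_simps)
qed

lemma doubly_stochastic_relative_entropy_nonneg:
  fixes P :: "'i::finite \<Rightarrow> 'j::finite \<Rightarrow> real" and p :: "'i \<Rightarrow> real" and q :: "'j \<Rightarrow> real"
  assumes P: "\<And>i j. P i j \<ge> 0" and p: "\<And>i. p i \<ge> 0" and q: "\<And>j. q j \<ge> 0"
    and row: "\<And>i. (\<Sum>j\<in>UNIV. P i j) = 1" and col: "\<And>j. (\<Sum>i\<in>UNIV. P i j) = 1"
    and total: "(\<Sum>i\<in>UNIV. p i) = (\<Sum>j\<in>UNIV. q j)"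
    and support: "\<And>i j. p i * P i j \<noteq> 0 \<Longrightarrow> q j > 0"
  shows "0 \<le> (\<Sum>i\<in>UNIV. \<Sum>j\<in>UNIV. P i j * p i * (ln0 (p i) - ln0 (q j)))"
proof -
  have "(\<Sum>i\<in>UNIV. \<Sum>j\<in>UNIV. P i j * p i) = (\<Sum>i\<in>UNIV. \<Sum>j\<in>UNIV. P i j * q j)"
    using total row col
    by (simp add: sum_distrib_right[symmetric] sum.swap[of "\<lambda>i j. P i j * q j"])
  hence "0 = (\<Sum>i\<in>UNIV. \<Sum>j\<in>UNIV. P i j * (p i - q j))"
    by (simp add: right_diff_distrib sum_subtractf)
  also have "\<dots> \<le> (\<Sum>i\<in>UNIV. \<Sum>j\<in>UNIV. P i j * (p i * (ln0 (p i) - ln0 (q j))))"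
  proof (intro sum_mono)
    fix i j
    show "P i j * (p i - q j) \<le> P i j * (p i * (ln0 (p i) - ln0 (q j)))"
    proof (cases "P i j = 0")
      case False
      thus ?thesis using P p q support by (intro mult_left_mono ln0_diff_ge) auto
    qed simp
  qed
  finally show ?thesis by (simp add: mult.assoc)
qed

theorem rel_entropy_nonneg:
  fixes \<rho> \<sigma> :: "complex^'n^'n"
  assumes r: "density_op \<rho>" and s: "density_op \<sigma>"
  shows "rel_entropy \<rho> \<sigma> \<ge> 0"
proof (cases "\<exists>\<psi>. \<sigma> *v \<psi> = 0 \<and> cinner \<psi> (\<rho> *v \<psi>) \<noteq> 0")
  case True thus ?thesis by (simp add: rel_entropy_def)
next
  case False
  have hr: "hermitian \<rho>" and hs: "hermitian \<sigma>" using r s by (auto simp: density_op_def)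
  obtain a p where da: "spectral_decomp \<rho> a p" using spectral_decomp_exists[OF hr] by blast
  obtain b q where db: "spectral_decomp \<sigma> b q" using spectral_decomp_exists[OF hs] by blast
  define P where "P i j = (cmod (cinner (a i) (b j)))^2" for i j
  have p: "p i \<ge> 0" for i using density_op_spectrum(1)[OF r da] .
  have q: "q j \<ge> 0" for j using density_op_spectrum(1)[OF s db] .
  have total: "(\<Sum>i\<in>UNIV. p i) = (\<Sum>j\<in>UNIV. q j)"
    using density_op_spectrum(2)[OF r da] density_op_spectrum(2)[OF s db] by simp
  note row = spectral_decomp_overlap_doubly_stochastic(1)[OF da db, folded P_def]
    and col = spectral_decomp_overlap_doubly_stochastic(2)[OF da db, folded P_def]
  have rb: "Re (cinner (b j) (\<rho> *v b j)) = (\<Sum>i\<in>UNIV. p i * P i j)" for j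
    by (simp add: quadratic_form_spectral_decomp[OF da] Re_sum P_def)
  have support: "q j > 0" if "p i * P i j \<noteq> 0" for i j
  proof (rule ccontr)
    assume "\<not> q j > 0"
    hence "\<sigma> *v b j = 0" using q[of j] db by (simp add: spectral_decomp_def)
    hence "(\<Sum>i\<in>UNIV. p i * P i j) = 0" using False rb[of j] by auto
    moreover have "p i * P i j \<ge> 0" "\<forall>i. p i * P i j \<ge> 0" using p by (simp_all add: P_def)
    ultimately show False using that by (simp add: sum_nonneg_eq_0_iff)
  qed
  have "Re (trace (\<rho> ** mat_log \<rho>)) = (\<Sum>i\<in>UNIV. ln0 (p i) * p i * (\<Sum>j\<in>UNIV. P i j))"
    using Re_trace_mult_herm_fun_self[OF hr da] row by (simp add: mat_log_def mult.commute)
  also have "\<dots> = (\<Sum>i\<in>UNIV. \<Sum>j\<in>UNIV. P i j * p i * ln0 (p i))"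
    by (simp add: sum_distrib_left mult_ac)
  finally have log_\<rho>: "Re (trace (\<rho> ** mat_log \<rho>)) = (\<Sum>i\<in>UNIV. \<Sum>j\<in>UNIV. P i j * p i * ln0 (p i))" .
  have "Re (trace (\<rho> ** mat_log \<sigma>)) = (\<Sum>j\<in>UNIV. ln0 (q j) * (\<Sum>i\<in>UNIV. p i * P i j))"
    by (simp add: mat_log_def Re_trace_mult_herm_fun[OF hs db] rb)
  also have "\<dots> = (\<Sum>i\<in>UNIV. \<Sum>j\<in>UNIV. P i j * p i * ln0 (q j))"
    unfolding sum_distrib_left by (subst sum.swap) (simp add: mult_ac)
  finally have log_\<sigma>: "Re (trace (\<rho> ** mat_log \<sigma>)) = (\<Sum>i\<in>UNIV. \<Sum>j\<in>UNIV. P i j * p i * ln0 (q j))" .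
  have "rel_entropy \<rho> \<sigma> = ereal (\<Sum>i\<in>UNIV. \<Sum>j\<in>UNIV. P i j * p i * (ln0 (p i) - ln0 (q j)))"
    using False log_\<rho> log_\<sigma> by (simp add: rel_entropy_def right_diff_distrib sum_subtractf)
  thus ?thesis
    using doubly_stochastic_relative_entropy_nonneg[OF _ p q row col total support]
    by (simp add: P_def)
qed

section \<open>Entropy balance of a measurement\<close>

lemma positive_semidef_conj: "positive_semidef A \<Longrightarrow> positive_semidef (V ** A ** adj V)"
  unfolding positive_semidef_def by (metis cinner_adj adj_adj matrix_vector_mul_assoc)

lemma positive_semidef_scaleR: "positive_semidef A \<Longrightarrow> r \<ge> 0 \<Longrightarrow> positive_semidef (r *\<^sub>R A)"
  unfolding positive_semidef_def by (simp add: matrix_vector_mult_scaleR_left)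

lemma density_op_measurement_outcome:
  assumes h: "hermitian \<rho>" and pos: "positive_semidef \<rho>" and u: "unitary V"
    and p: "Re (trace (adj M ** M ** \<rho>)) > 0"
  shows "density_op (V ** ((1 / Re (trace (adj M ** M ** \<rho>))) *\<^sub>R (M ** \<rho> ** adj M)) ** adj V)"
proof -
  have "trace (M ** \<rho> ** adj M) = trace (adj M ** M ** \<rho>)"
    by (metis trace_mul_sym matrix_mul_assoc)
  moreover have "trace (M ** \<rho> ** adj M) = of_real (Re (trace (M ** \<rho> ** adj M)))"
    by (rule trace_hermitian_real[OF hermitian_conj[OF h]])
  ultimately have "trace (M ** \<rho> ** adj M) = of_real (Re (trace (adj M ** M ** \<rho>)))"
    by simp
  thus ?thesis
    using p u unfolding density_op_iff
    by (simp add: hermitian_conj hermitian_scaleR h positive_semidef_conj positive_semidef_scaleR pos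
        trace_unitary_conj trace_scaleR)
qed

lemma neg_tr_log_eq_vN_entropy_plus_rel_entropy:
  "neg_tr_log \<rho> \<sigma> = ereal (vN_entropy \<rho>) + rel_entropy \<rho> \<sigma>"
  by (simp add: neg_tr_log_def rel_entropy_def vN_entropy_def)

lemma weighted_sum_split_nonneg:
  fixes p s :: "'b \<Rightarrow> real" and r :: "'b \<Rightarrow> ereal"
  assumes "finite A" and p: "\<And>b. b \<in> A \<Longrightarrow> p b > 0" and r: "\<And>b. b \<in> A \<Longrightarrow> r b \<ge> 0"
  shows "(\<Sum>b\<in>A. ereal (p b) * (ereal (s b) + r b)) - ereal c
           = (\<Sum>b\<in>A. ereal (p b) * r b) - ereal (c - (\<Sum>b\<in>A. p b * s b))"
    and "(\<Sum>b\<in>A. ereal (p b) * (ereal (s b) + r b)) - ereal c \<ge> - ereal (c - (\<Sum>b\<in>A. p b * s b))"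
proof -
  define R where "R = (\<Sum>b\<in>A. ereal (p b) * r b)"
  have "R \<ge> 0" unfolding R_def using p r by (intro sum_nonneg) (simp add: less_imp_le)
  have "(\<Sum>b\<in>A. ereal (p b) * (ereal (s b) + r b)) = (\<Sum>b\<in>A. ereal (p b * s b) + ereal (p b) * r b)"
    by (intro sum.cong refl) (simp add: ereal_distrib_left)
  hence split: "(\<Sum>b\<in>A. ereal (p b) * (ereal (s b) + r b)) = ereal (\<Sum>b\<in>A. p b * s b) + R"
    by (simp add: R_def sum.distrib)
  show "(\<Sum>b\<in>A. ereal (p b) * (ereal (s b) + r b)) - ereal c = R - ereal (c - (\<Sum>b\<in>A. p b * s b))"
    and "(\<Sum>b\<in>A. ereal (p b) * (ereal (s b) + r b)) - ereal c \<ge> - ereal (c - (\<Sum>b\<in>A. p b * s b))"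
    unfolding split using \<open>R \<ge> 0\<close> by (cases R; simp)+
qed

theorem theorem6p1:
  fixes \<rho>i U :: "complex^'n^'n"
    and B :: "'b set"
    and M Ub \<rho>0 :: "'b \<Rightarrow> complex^'n^'n"
  assumes "density_op \<rho>i"
    and "unitary U"
    and "finite B"
    and "(\<Sum>b\<in>B. adj (M b) ** M b) = mat 1"
    and "\<forall>b\<in>B. unitary (Ub b)"
    and "\<forall>b\<in>B. density_op (\<rho>0 b)"
  shows
    "let \<rho>' = U ** \<rho>i ** adj U;
         E = (\<lambda>b. adj (M b) ** M b);
         p = (\<lambda>b. Re (trace (E b ** \<rho>')));
         \<rho>'b = (\<lambda>b. (1 / p b) *\<^sub>R (M b ** \<rho>' ** adj (M b)));
         Bp = {b\<in>B. p b > 0};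
         I_QC = vN_entropy \<rho>' - (\<Sum>b\<in>Bp. p b * vN_entropy (\<rho>'b b));
         \<rho>f = (\<lambda>b. Ub b ** \<rho>'b b ** adj (Ub b))
     in ((\<Sum>b\<in>Bp. ereal (p b) * neg_tr_log (\<rho>f b) (\<rho>0 b)) - ereal (vN_entropy \<rho>i)
           = (\<Sum>b\<in>Bp. ereal (p b) * rel_entropy (\<rho>f b) (\<rho>0 b)) - ereal I_QC)
      \<and> ((\<Sum>b\<in>Bp. ereal (p b) * neg_tr_log (\<rho>f b) (\<rho>0 b)) - ereal (vN_entropy \<rho>i)
           \<ge> - ereal I_QC)"
proof -
  define \<rho>' where "\<rho>' = U ** \<rho>i ** adj U"
  define p where "p b = Re (trace (adj (M b) ** M b ** \<rho>'))" for b
  define \<rho>'b where "\<rho>'b b = (1 / p b) *\<^sub>R (M b ** \<rho>' ** adj (M b))" for b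
  define \<rho>f where "\<rho>f b = Ub b ** \<rho>'b b ** adj (Ub b)" for b
  define Bp where "Bp = {b\<in>B. p b > 0}"
  have h': "hermitian \<rho>'" and pos': "positive_semidef \<rho>'"
    using assms(1) by (auto simp: \<rho>'_def density_op_iff hermitian_conj positive_semidef_conj)
  have "vN_entropy \<rho>' = vN_entropy \<rho>i"
    using assms(1,2) by (simp add: \<rho>'_def density_op_def vN_entropy_unitary_conj)
  moreover have "neg_tr_log (\<rho>f b) (\<rho>0 b) = ereal (vN_entropy (\<rho>'b b)) + rel_entropy (\<rho>f b) (\<rho>0 b)"
    if "b \<in> Bp" for b
    using assms(5) that h' by (simp add: neg_tr_log_eq_vN_entropy_plus_rel_entropy Bp_def \<rho>f_def \<rho>'b_def
        vN_entropy_unitary_conj hermitian_conj hermitian_scaleR)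
  moreover have "rel_entropy (\<rho>f b) (\<rho>0 b) \<ge> 0" if "b \<in> Bp" for b
    using that assms(5,6) density_op_measurement_outcome[OF h' pos', of "Ub b" "M b"]
    by (intro rel_entropy_nonneg) (auto simp: Bp_def p_def \<rho>f_def \<rho>'b_def)
  moreover have "finite Bp" "\<And>b. b \<in> Bp \<Longrightarrow> p b > 0" using assms(3) by (auto simp: Bp_def)
  ultimately show ?thesis
    using weighted_sum_split_nonneg[where A = Bp and p = p and r = "\<lambda>b. rel_entropy (\<rho>f b) (\<rho>0 b)"
        and s = "\<lambda>b. vN_entropy (\<rho>'b b)" and c = "vN_entropy \<rho>i"]
    unfolding Let_def \<rho>'_def[symmetric] p_def[symmetric] \<rho>'b_def[symmetric] \<rho>f_def[symmetric]
      Bp_def[symmetric]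
    by (simp cong: sum.cong)
qed

end
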